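(* Let $\theta_1,\theta_2,\dots$ be real numbers with $\theta_n\to\theta$ as $n\to\infty$, and define $\Lambda$ on $[1,\infty)$ by $\Lambda\bigl(\frac1{1-s}\bigr)=\exp\sum_{j\ge1}\frac{\theta_j-\theta}{j}s^j$ for $0\le s<1$. Let $(x_n)$, $(y_n)$ be sequences in $[1,\infty)$ with $x_n\to\infty$, $y_n\to\infty$, and suppose there is a constant $C>1$ with $\frac1C\le\frac{x_n}{y_n}\le C$ for all $n$. Then $\displaystyle\lim_{n\to\infty}\frac{\Lambda(x_n)}{\Lambda(y_n)}=1$. *)

theory Defs
  imports Complex_Main
begin

text \<open>Lambda on [1,inf): Lambda(1/(1-s)) = exp (sum_{j>=1} (theta_j - theta)/j * s^j), 0 <= s < 1.
  Equivalently, with s = 1 - 1/x. The sequence theta_1, theta_2, ... is encoded as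
  th :: nat => real with th j = theta_j (th 0 unused).\<close>
definition Lambda :: "(nat \<Rightarrow> real) \<Rightarrow> real \<Rightarrow> real \<Rightarrow> real" where
  "Lambda th \<theta> x =
     exp (\<Sum>j. (th (Suc j) - \<theta>) / real (Suc j) * (1 - 1 / x) ^ Suc j)"

end

theory Submission
  imports Defs
begin

text \<open>
  Write \<open>a j = \<theta>\<^sub>j\<^sub>+\<^sub>1 - \<theta>\<close> and \<open>F(s) = \<Sum>\<^sub>j a j / (j+1) * s^(j+1)\<close>, so that
  \<open>Lambda(x) = exp (F (1 - 1/x))\<close> and the ratio in the theorem is \<open>exp (F s\<^sub>n - F t\<^sub>n)\<close>
  with \<open>s\<^sub>n = 1 - 1/x\<^sub>n\<close>, \<open>t\<^sub>n = 1 - 1/y\<^sub>n\<close>.  It suffices to show \<open>F s\<^sub>n - F t\<^sub>n \<rightarrow> 0\<close>.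

  The core estimate (\<open>log_series_diff_bound\<close>) is a Lipschitz-type bound: if \<open>|a j| \<le> B\<close>
  always and \<open>|a j| \<le> \<epsilon>\<close> for \<open>j \<ge> N\<close>, then
  \<open>|F s - F t| \<le> |s - t| * B * N + \<epsilon> * |s - t| / (1 - max s t)\<close>,
  obtained termwise from \<open>|s^(j+1) - t^(j+1)| \<le> (j+1) |s - t| m^j\<close>.
  Since \<open>a j \<rightarrow> 0\<close>, the difference \<open>F s\<^sub>n - F t\<^sub>n\<close> tends to 0 whenever \<open>|s\<^sub>n - t\<^sub>n| \<rightarrow> 0\<close> and
  \<open>|s\<^sub>n - t\<^sub>n|\<close> is at most a constant times \<open>1 - max s\<^sub>n t\<^sub>n\<close>
  (\<open>log_series_diff_tendsto_zero\<close>).  The comparability \<open>x\<^sub>n / y\<^sub>n \<in> [1/C, C]\<close> yields exactly the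
  second condition with constant \<open>C - 1\<close> (\<open>ratio_bound\<close>), and \<open>x\<^sub>n, y\<^sub>n \<rightarrow> \<infinity>\<close> the first.
\<close>

lemma power_diff_bound:
  fixes s t m :: real
  assumes "0 \<le> s" "s \<le> m" "0 \<le> t" "t \<le> m"
  shows "\<bar>s ^ Suc k - t ^ Suc k\<bar> \<le> real (Suc k) * \<bar>s - t\<bar> * m ^ k"
proof (induction k)
  case 0
  then show ?case by simp
next
  case (Suc k)
  have split: "s ^ Suc (Suc k) - t ^ Suc (Suc k) = s * (s ^ Suc k - t ^ Suc k) + t ^ Suc k * (s - t)"
    by (simp add: algebra_simps)
  have "\<bar>s * (s ^ Suc k - t ^ Suc k)\<bar> \<le> m * (real (Suc k) * \<bar>s - t\<bar> * m ^ k)"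
    unfolding abs_mult using Suc assms by (intro mult_mono) auto
  moreover have "\<bar>t ^ Suc k * (s - t)\<bar> \<le> m ^ Suc k * \<bar>s - t\<bar>"
    unfolding abs_mult using assms power_mono[of t m "Suc k"] by (intro mult_mono) auto
  ultimately have "\<bar>s ^ Suc (Suc k) - t ^ Suc (Suc k)\<bar>
      \<le> m * (real (Suc k) * \<bar>s - t\<bar> * m ^ k) + m ^ Suc k * \<bar>s - t\<bar>"
    unfolding split by (meson abs_triangle_ineq add_mono order_trans)
  also have "\<dots> = real (Suc (Suc k)) * \<bar>s - t\<bar> * m ^ Suc k"
    by (simp add: algebra_simps)
  finally show ?case .
qed

lemma log_series_term_diff_bound:
  fixes s t m c :: real
  assumes "0 \<le> s" "s \<le> m" "0 \<le> t" "t \<le> m"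
  shows "\<bar>c / real (Suc j) * s ^ Suc j - c / real (Suc j) * t ^ Suc j\<bar> \<le> \<bar>s - t\<bar> * (\<bar>c\<bar> * m ^ j)"
proof -
  have "\<bar>c / real (Suc j) * s ^ Suc j - c / real (Suc j) * t ^ Suc j\<bar>
      = \<bar>c\<bar> / real (Suc j) * \<bar>s ^ Suc j - t ^ Suc j\<bar>"
  proof -
    have "c / real (Suc j) * s ^ Suc j - c / real (Suc j) * t ^ Suc j
        = c / real (Suc j) * (s ^ Suc j - t ^ Suc j)"
      by (simp only: right_diff_distrib)
    then show ?thesis by (simp only: abs_mult abs_divide abs_of_nat)
  qed
  also have "\<dots> \<le> \<bar>c\<bar> / real (Suc j) * (real (Suc j) * \<bar>s - t\<bar> * m ^ j)"
    by (intro mult_left_mono power_diff_bound assms) auto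
  also have "\<dots> = \<bar>s - t\<bar> * (\<bar>c\<bar> * m ^ j)" by simp
  finally show ?thesis .
qed

definition log_series :: "(nat \<Rightarrow> real) \<Rightarrow> real \<Rightarrow> real" where
  "log_series a s = (\<Sum>j. a j / real (Suc j) * s ^ Suc j)"

lemma log_series_summable:
  assumes "\<And>j. \<bar>a j\<bar> \<le> B" "0 \<le> s" "s < 1"
  shows "summable (\<lambda>j. a j / real (Suc j) * s ^ Suc j)"
proof (rule summable_comparison_test'[where N = 0])
  show "summable (\<lambda>j. B * s ^ Suc j)"
    using assms by (intro summable_mult) (simp add: summable_geometric)
  fix j
  have "\<bar>a j\<bar> / real (Suc j) \<le> \<bar>a j\<bar>"
    using divide_left_mono[of 1 "real (Suc j)" "\<bar>a j\<bar>"] by simp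
  also have "\<dots> \<le> B" by (rule assms)
  finally have "\<bar>a j\<bar> / real (Suc j) * s ^ Suc j \<le> B * s ^ Suc j"
    using assms by (intro mult_right_mono) auto
  then show "norm (a j / real (Suc j) * s ^ Suc j) \<le> B * s ^ Suc j"
    using assms by (simp add: abs_mult)
qed

lemma majorant_sums:
  fixes m B \<epsilon> :: real
  assumes "0 \<le> m" "m < 1"
  shows "(\<lambda>j. (if j < N then B else 0) + \<epsilon> * m ^ j) sums (B * real N + \<epsilon> / (1 - m))"
proof (rule sums_add)
  have "(\<lambda>j. if j < N then B else 0) sums (\<Sum>j\<in>{..<N}. if j < N then B else 0)"
    by (rule sums_finite) auto
  then show "(\<lambda>j. if j < N then B else 0) sums (B * real N)" by (simp add: mult.commute)
  show "(\<lambda>j. \<epsilon> * m ^ j) sums (\<epsilon> / (1 - m))"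
    using sums_mult[OF geometric_sums, of m \<epsilon>] assms by simp
qed

text \<open>The key Lipschitz-type estimate: the first \<open>N\<close> coefficients contribute at most
  \<open>|s - t| B N\<close>, the small tail at most \<open>\<epsilon> |s - t| \<Sum> m^j = \<epsilon> |s - t| / (1 - m)\<close>.\<close>
lemma log_series_diff_bound:
  assumes B: "\<And>j. \<bar>a j\<bar> \<le> B" and N: "\<And>j. j \<ge> N \<Longrightarrow> \<bar>a j\<bar> \<le> \<epsilon>" and "0 \<le> \<epsilon>"
    and s: "0 \<le> s" "s < 1" and t: "0 \<le> t" "t < 1"
  shows "\<bar>log_series a s - log_series a t\<bar>
           \<le> \<bar>s - t\<bar> * (B * real N) + \<bar>s - t\<bar> * \<epsilon> / (1 - max s t)"
proof -
  define m where "m = max s t"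
  have m: "0 \<le> m" "m < 1" "s \<le> m" "t \<le> m" using s t by (auto simp: m_def)
  define d where "d j = a j / real (Suc j) * s ^ Suc j - a j / real (Suc j) * t ^ Suc j" for j
  define head where "head j = (if j < N then B else 0)" for j
  define g where "g j = \<bar>s - t\<bar> * (head j + \<epsilon> * m ^ j)" for j
  have g_sums: "g sums (\<bar>s - t\<bar> * (B * real N) + \<bar>s - t\<bar> * \<epsilon> / (1 - m))"
    using sums_mult[OF majorant_sums[OF m(1,2), of N B \<epsilon>], of "\<bar>s - t\<bar>"]
    unfolding g_def head_def by (simp add: distrib_left)
  note summable_g = sums_summable[OF g_sums] and sum_g = sums_unique[OF g_sums, symmetric]
  have coeff_bound: "\<bar>a j\<bar> * m ^ j \<le> head j + \<epsilon> * m ^ j" for j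
  proof -
    have mj: "0 \<le> m ^ j" "m ^ j \<le> 1" using m by (auto intro: power_le_one)
    show ?thesis
    proof (cases "j < N")
      case True
      have "\<bar>a j\<bar> * m ^ j \<le> B * 1" using B[of j] mj by (intro mult_mono) auto
      moreover have "0 \<le> \<epsilon> * m ^ j" using mj \<open>0 \<le> \<epsilon>\<close> by simp
      ultimately show ?thesis using True by (simp add: head_def)
    next
      case False
      then show ?thesis using N[of j] mj by (simp add: head_def mult_right_mono)
    qed
  qed
  have d_le_g: "\<bar>d j\<bar> \<le> g j" for j
  proof -
    have "\<bar>d j\<bar> \<le> \<bar>s - t\<bar> * (\<bar>a j\<bar> * m ^ j)"
      unfolding d_def by (rule log_series_term_diff_bound) (use m s t in auto)
    also have "\<dots> \<le> g j"
      unfolding g_def by (intro mult_left_mono coeff_bound) simp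
    finally show ?thesis .
  qed
  have summable_abs_d: "summable (\<lambda>j. \<bar>d j\<bar>)"
    by (rule summable_comparison_test'[OF summable_g, where N = 0]) (use d_le_g in auto)
  have "log_series a s - log_series a t = suminf d"
    unfolding log_series_def d_def
    using log_series_summable[OF B s] log_series_summable[OF B t]
    by (subst suminf_diff) auto
  also have "\<bar>\<dots>\<bar> \<le> (\<Sum>j. \<bar>d j\<bar>)" by (rule summable_rabs[OF summable_abs_d])
  also have "\<dots> \<le> suminf g" by (rule suminf_le[OF d_le_g summable_abs_d summable_g])
  finally show ?thesis unfolding sum_g m_def .
qed

lemma log_series_diff_tendsto_zero:
  fixes s t :: "nat \<Rightarrow> real" and c :: real
  assumes a: "a \<longlonglongrightarrow> 0"
    and st: "\<And>n. 0 \<le> s n \<and> s n < 1 \<and> 0 \<le> t n \<and> t n < 1"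
    and gap: "(\<lambda>n. \<bar>s n - t n\<bar>) \<longlonglongrightarrow> 0"
    and gap_rel: "\<And>n. \<bar>s n - t n\<bar> \<le> c * (1 - max (s n) (t n))"
  shows "(\<lambda>n. log_series a (s n) - log_series a (t n)) \<longlonglongrightarrow> 0"
proof (rule tendsto_iff[THEN iffD2], intro allI impI)
  fix e :: real
  assume e: "e > 0"
  obtain B where B: "\<And>j. \<bar>a j\<bar> \<le> B"
    using convergent_imp_Bseq[OF convergentI[OF a]] by (metis BseqE real_norm_def)
  have c: "0 \<le> c"
    using gap_rel[of 0] st[of 0] by (smt (verit) zero_le_mult_iff)
  define \<epsilon> where "\<epsilon> = e / (2 * (c + 1))"
  have \<epsilon>: "\<epsilon> > 0" "c * \<epsilon> < e / 2"
    using e c by (auto simp: \<epsilon>_def field_simps)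
  have "eventually (\<lambda>j. dist (a j) 0 < \<epsilon>) sequentially"
    using tendsto_iff[THEN iffD1, OF a] \<epsilon> by blast
  then obtain N where N: "\<And>j. j \<ge> N \<Longrightarrow> \<bar>a j\<bar> \<le> \<epsilon>"
    unfolding eventually_sequentially dist_real_def by (metis diff_zero less_imp_le)
  have "(\<lambda>n. \<bar>s n - t n\<bar> * (B * real N)) \<longlonglongrightarrow> 0"
    using tendsto_mult_left_zero[OF gap] by simp
  then have head_small: "eventually (\<lambda>n. \<bar>s n - t n\<bar> * (B * real N) < e / 2) sequentially"
    using e by (intro order_tendstoD) auto
  show "eventually (\<lambda>n. dist (log_series a (s n) - log_series a (t n)) 0 < e) sequentially"
  proof (rule eventually_mono[OF head_small])
    fix n
    assume head: "\<bar>s n - t n\<bar> * (B * real N) < e / 2"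
    have pos: "1 - max (s n) (t n) > 0" using st[of n] by auto
    have "\<bar>s n - t n\<bar> * \<epsilon> / (1 - max (s n) (t n)) \<le> c * \<epsilon>"
      using gap_rel[of n] pos \<epsilon>(1)
      by (simp add: divide_le_eq mult.commute mult.left_commute mult_left_mono)
    moreover have "\<bar>log_series a (s n) - log_series a (t n)\<bar>
        \<le> \<bar>s n - t n\<bar> * (B * real N) + \<bar>s n - t n\<bar> * \<epsilon> / (1 - max (s n) (t n))"
      using st[of n] \<epsilon>(1) by (intro log_series_diff_bound[OF B N]) auto
    ultimately show "dist (log_series a (s n) - log_series a (t n)) 0 < e"
      using head \<epsilon>(2) by (simp add: dist_real_def)
  qed
qed

lemma ratio_bound:
  fixes x y C :: real
  assumes "x \<ge> 1" "y \<ge> 1" "1 / C \<le> x / y" "x / y \<le> C" "C > 1"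
  shows "\<bar>(1 - 1/x) - (1 - 1/y)\<bar> \<le> (C - 1) * (1 - max (1 - 1/x) (1 - 1/y))"
proof (cases "x \<ge> y")
  case True
  have "1/x \<le> 1/y" using True assms by (simp add: frac_le)
  then have e: "\<bar>(1 - 1/x) - (1 - 1/y)\<bar> = 1/y - 1/x" "max (1 - 1/x) (1 - 1/y) = 1 - 1/x"
    by auto
  have "(x/y - 1) / x \<le> (C - 1) / x" using assms by (intro divide_right_mono) auto
  moreover have "(x/y - 1) / x = 1/y - 1/x" using assms by (simp add: field_simps)
  ultimately show ?thesis unfolding e by simp
next
  case False
  have "1/y \<le> 1/x" using False assms by (simp add: frac_le)
  then have e: "\<bar>(1 - 1/x) - (1 - 1/y)\<bar> = 1/x - 1/y" "max (1 - 1/x) (1 - 1/y) = 1 - 1/y"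
    by auto
  have "y / x \<le> C" using assms by (simp add: field_simps)
  then have "(y/x - 1) / y \<le> (C - 1) / y" using assms by (intro divide_right_mono) auto
  moreover have "(y/x - 1) / y = 1/x - 1/y" using assms by (simp add: field_simps)
  ultimately show ?thesis unfolding e by simp
qed

theorem lemma6p2:
  fixes th :: "nat \<Rightarrow> real" and \<theta> C :: real and x y :: "nat \<Rightarrow> real"
  assumes "th \<longlonglongrightarrow> \<theta>"
    and "\<And>n. x n \<ge> 1" and "\<And>n. y n \<ge> 1"
    and "filterlim x at_top sequentially" and "filterlim y at_top sequentially"
    and "C > 1"
    and "\<And>n. 1 / C \<le> x n / y n \<and> x n / y n \<le> C"
  shows "(\<lambda>n. Lambda th \<theta> (x n) / Lambda th \<theta> (y n)) \<longlonglongrightarrow> 1"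
proof -
  define a where "a j = th (Suc j) - \<theta>" for j
  define s where "s n = 1 - 1 / x n" for n
  define t where "t n = 1 - 1 / y n" for n
  have a: "a \<longlonglongrightarrow> 0"
    unfolding a_def using tendsto_diff[OF LIMSEQ_Suc[OF assms(1)] tendsto_const[of \<theta>]] by simp
  have st: "0 \<le> s n \<and> s n < 1 \<and> 0 \<le> t n \<and> t n < 1" for n
    using assms(2,3)[of n] by (auto simp: s_def t_def)
  have "(\<lambda>n. 1 / y n - 1 / x n) \<longlonglongrightarrow> 0 - 0"
    using assms(4,5) by (intro tendsto_diff tendsto_divide_0[OF tendsto_const]
        filterlim_at_top_imp_at_infinity)
  then have gap: "(\<lambda>n. \<bar>s n - t n\<bar>) \<longlonglongrightarrow> 0"
    by (simp add: s_def t_def tendsto_rabs_zero_iff)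
  have gap_rel: "\<bar>s n - t n\<bar> \<le> (C - 1) * (1 - max (s n) (t n))" for n
    unfolding s_def t_def using ratio_bound assms(2,3,6,7) by blast
  have "(\<lambda>n. exp (log_series a (s n) - log_series a (t n))) \<longlonglongrightarrow> exp 0"
    by (intro tendsto_exp log_series_diff_tendsto_zero[OF a st gap gap_rel])
  moreover have "Lambda th \<theta> z = exp (log_series a (1 - 1 / z))" for z
    unfolding Lambda_def log_series_def a_def by simp
  ultimately show ?thesis by (simp add: s_def t_def exp_diff)
qed

end
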